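(* Let $A$ be a unital $C^*$-algebra and let $p,q\in A$ be properly infinite, full projections with $p\sim q$ (Murray–von Neumann equivalent). Suppose there is a properly infinite, full projection $r\in A$ with $pr=0$ and $qr=0$. Then $p\sim_h q$, i.e. $p$ and $q$ are connected by a norm-continuous path of projections in $A$ (equivalently $q=upu^*$ for some $u\in\mathcal U^0(A)$).
   Context: A projection $p$ is properly infinite if there are mutually orthogonal subprojections $e,f\le p$ with $e\sim p\sim f$. A projection is full if it is not contained in any proper closed two-sided ideal. $\mathcal U^0(A)$ denotes the connected component of the identity in the unitary group of $A$. *)

theory Defs
  imports Complex_Main
begin

text \<open>The real-normed structure comes from the library classes; the complex scalar
  multiplication is an additional operation extending the real one.\<close>

class cstar_algebra_1 = banach + real_normed_algebra_1 +
  fixes cstar :: "'a \<Rightarrow> 'a"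
    and scaleC :: "complex \<Rightarrow> 'a \<Rightarrow> 'a"
  assumes scaleC_of_real: "scaleC (of_real r) x = scaleR r x"
    and scaleC_add_right: "scaleC a (x + y) = scaleC a x + scaleC a y"
    and scaleC_add_left: "scaleC (a + b) x = scaleC a x + scaleC b x"
    and scaleC_scaleC: "scaleC a (scaleC b x) = scaleC (a * b) x"
    and scaleC_one: "scaleC 1 x = x"
    and mult_scaleC_left: "scaleC a x * y = scaleC a (x * y)"
    and mult_scaleC_right: "x * scaleC a y = scaleC a (x * y)"
    and norm_scaleC: "norm (scaleC a x) = cmod a * norm x"
    and cstar_add: "cstar (x + y) = cstar x + cstar y"
    and cstar_scaleC: "cstar (scaleC a x) = scaleC (cnj a) (cstar x)"
    and cstar_mult: "cstar (x * y) = cstar y * cstar x"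
    and cstar_cstar: "cstar (cstar x) = x"
    and cstar_identity: "norm (cstar x * x) = (norm x)\<^sup>2"

definition projection :: "'a::cstar_algebra_1 \<Rightarrow> bool" where
  "projection p \<longleftrightarrow> p * p = p \<and> cstar p = p"

definition mvn_equiv :: "'a::cstar_algebra_1 \<Rightarrow> 'a \<Rightarrow> bool" where
  "mvn_equiv p q \<longleftrightarrow> (\<exists>v. cstar v * v = p \<and> v * cstar v = q)"

definition subprojection :: "'a::cstar_algebra_1 \<Rightarrow> 'a \<Rightarrow> bool" where
  "subprojection e p \<longleftrightarrow> projection e \<and> p * e = e"

definition properly_infinite :: "'a::cstar_algebra_1 \<Rightarrow> bool" where
  "properly_infinite p \<longleftrightarrow> projection p \<and>
     (\<exists>e f. subprojection e p \<and> subprojection f p \<and> e * f = 0 \<and>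
            mvn_equiv e p \<and> mvn_equiv p f)"

definition closed_ideal :: "'a::cstar_algebra_1 set \<Rightarrow> bool" where
  "closed_ideal I \<longleftrightarrow> 0 \<in> I \<and> (\<forall>x\<in>I. \<forall>y\<in>I. x + y \<in> I) \<and>
     (\<forall>c x. x \<in> I \<longrightarrow> scaleC c x \<in> I) \<and>
     (\<forall>a x. x \<in> I \<longrightarrow> a * x \<in> I \<and> x * a \<in> I) \<and> closed I"

definition full :: "'a::cstar_algebra_1 \<Rightarrow> bool" where
  "full p \<longleftrightarrow> (\<forall>I. closed_ideal I \<and> I \<noteq> UNIV \<longrightarrow> p \<notin> I)"

definition homotopic_proj :: "'a::cstar_algebra_1 \<Rightarrow> 'a \<Rightarrow> bool" where
  "homotopic_proj p q \<longleftrightarrow> (\<exists>\<gamma>::real \<Rightarrow> 'a. continuous_on {0..1} \<gamma> \<and>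
     (\<forall>t\<in>{0..1}. projection (\<gamma> t)) \<and> \<gamma> 0 = p \<and> \<gamma> 1 = q)"

end

theory Submission
  imports Defs "HOL-Analysis.Analysis" "HOL-Computational_Algebra.Formal_Power_Series"
begin

(* Approximating p within
       distance 1 and inverting the compression p(yrz)p in the corner pAp gives a
       factorisation p = c w with c in pAr and w in rAp.
   (2) A functional calculus by power series (square root and inverse square root of
       1 - u for norm u < 1, computed in a corner) turns this factorisation into an
       isometry V in rAp: V^* V = p and r V = V.
   (3) The projection e = V V^* lies under r, so it is orthogonal to p and q and equivalent
       to both.  Equivalent orthogonal projections are joined by the rotation path
       cos^2 P + sin cos v + sin cos v^* + sin^2 Q, so p ~h e ~h q. *)

declare cstar_add[simp] cstar_mult[simp] cstar_cstar[simp]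

lemma cstar_zero[simp]: "cstar (0::'a::cstar_algebra_1) = 0"
  using cstar_add[of "0::'a" 0] by simp

lemma cstar_minus[simp]: "cstar (- x) = - cstar (x::'a::cstar_algebra_1)"
  using cstar_add[of "-x" x] by (simp add: eq_neg_iff_add_eq_0)

lemma cstar_diff[simp]: "cstar (x - y) = cstar x - cstar (y::'a::cstar_algebra_1)"
  unfolding diff_conv_add_uminus by (simp only: cstar_add cstar_minus)

lemma cstar_scaleR[simp]: "cstar (a *\<^sub>R x) = a *\<^sub>R cstar (x::'a::cstar_algebra_1)"
  by (metis cstar_scaleC scaleC_of_real complex_cnj_complex_of_real)

lemma cstar_one[simp]: "cstar (1::'a::cstar_algebra_1) = 1"
  using cstar_mult[of 1 "cstar (1::'a)"] by simp

lemma cstar_eq: "a * b = c \<Longrightarrow> cstar b * cstar a = cstar (c::'a::cstar_algebra_1)"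
  by (drule arg_cong[where f=cstar]) simp

lemma norm_cstar[simp]: "norm (cstar x) = norm (x::'a::cstar_algebra_1)"
proof -
  have le: "norm y \<le> norm (cstar y)" for y :: 'a
  proof (cases "norm y = 0")
    case False
    have "(norm y)\<^sup>2 = norm (cstar y * y)" by (rule cstar_identity[symmetric])
    also have "\<dots> \<le> norm (cstar y) * norm y" by (rule norm_mult_ineq)
    finally show ?thesis using False by (simp add: power2_eq_square)
  qed simp
  show ?thesis using le[of x] le[of "cstar x"] by simp
qed

lemma cstar_mult_self_eq_0: "cstar y * y = 0 \<Longrightarrow> (y::'a::cstar_algebra_1) = 0"
  using cstar_identity[of y] by simp

lemma bounded_linear_cstar: "bounded_linear (cstar :: 'a::cstar_algebra_1 \<Rightarrow> 'a)"
  by (rule bounded_linear_intro[where K=1]) auto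

lemma bounded_linear_scaleC: "bounded_linear (scaleC c :: 'a::cstar_algebra_1 \<Rightarrow> 'a)"
proof (rule bounded_linear_intro[where K="cmod c"])
  show "scaleC c (x + y) = scaleC c x + scaleC c y" for x y :: 'a by (rule scaleC_add_right)
  show "scaleC c (r *\<^sub>R x) = r *\<^sub>R scaleC c x" for r and x :: 'a
    by (metis scaleC_of_real scaleC_scaleC mult.commute)
  show "norm (scaleC c x) \<le> norm x * cmod c" for x :: 'a by (simp add: norm_scaleC)
qed

lemma projectionD: "projection P \<Longrightarrow> P * P = P" "projection P \<Longrightarrow> cstar P = P"
  by (simp_all add: projection_def)

lemma projection_norm_le_1: "projection (P::'a::cstar_algebra_1) \<Longrightarrow> norm P \<le> 1"
proof -
  assume P: "projection P"
  then have "(norm P)\<^sup>2 = norm P" using cstar_identity[of P] by (simp add: projectionD)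
  then have "norm P = 0 \<or> norm P = 1" by (simp add: power2_eq_square)
  then show ?thesis by auto
qed

lemma projection_orth_sym:
  "projection P \<Longrightarrow> projection Q \<Longrightarrow> P * Q = 0 \<Longrightarrow> Q * (P::'a::cstar_algebra_1) = 0"
  using cstar_eq[of P Q 0] by (simp add: projectionD)

lemma partial_isometry_right:
  assumes "cstar v * v = P" "projection P" shows "v * P = (v::'a::cstar_algebra_1)"
proof -
  have "cstar (v - v * P) * (v - v * P) = 0"
    using assms by (simp add: projectionD algebra_simps mult.assoc[symmetric])
  then show ?thesis using cstar_mult_self_eq_0 by fastforce
qed

lemma partial_isometry_left:
  assumes "v * cstar v = Q" "projection Q" shows "Q * v = (v::'a::cstar_algebra_1)"
  using cstar_eq[OF partial_isometry_right[of "cstar v" Q]] assms by (simp add: projectionD)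

section \<open>The closed ideal generated by a full, properly infinite projection\<close>

lemma closed_ideal_closure:
  fixes S :: "'a::cstar_algebra_1 set"
  assumes "0 \<in> S" and add: "\<And>a b. a \<in> S \<Longrightarrow> b \<in> S \<Longrightarrow> a + b \<in> S"
    and scale: "\<And>c a. a \<in> S \<Longrightarrow> scaleC c a \<in> S"
    and mult: "\<And>a b. a \<in> S \<Longrightarrow> b * a \<in> S \<and> a * b \<in> S"
  shows "closed_ideal (closure S)"
proof -
  have "x + y \<in> closure S" if xy: "x \<in> closure S" "y \<in> closure S" for x y
  proof -
    obtain f g where "\<forall>n. f n \<in> S" "f \<longlonglongrightarrow> x" "\<forall>n. g n \<in> S" "g \<longlonglongrightarrow> y"
      using xy unfolding closure_sequential by blast
    then show ?thesis unfolding closure_sequential using add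
      by (intro exI[of _ "\<lambda>n. f n + g n"]) (auto intro: tendsto_add)
  qed
  moreover have "scaleC c x \<in> closure S \<and> a * x \<in> closure S \<and> x * a \<in> closure S"
    if x: "x \<in> closure S" for c a x
  proof -
    obtain f where "\<forall>n. f n \<in> S" "f \<longlonglongrightarrow> x" using x unfolding closure_sequential by blast
    then show ?thesis unfolding closure_sequential using scale mult
      by (intro conjI exI[of _ "\<lambda>n. scaleC c (f n)"] exI[of _ "\<lambda>n. a * f n"]
                exI[of _ "\<lambda>n. f n * a"])
         (auto intro: tendsto_mult bounded_linear.tendsto[OF bounded_linear_scaleC])
  qed
  ultimately show ?thesis
    using assms(1) closure_subset unfolding closed_ideal_def by blast
qed

text \<open>A properly infinite projection \<open>r\<close> contains two isometries with orthogonal ranges,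
  so \<open>y\<^sub>1 r z\<^sub>1 + y\<^sub>2 r z\<^sub>2\<close> is again of the form \<open>y r z\<close>.\<close>
lemma properly_infinite_sum:
  assumes "properly_infinite (r::'a::cstar_algebra_1)"
  shows "\<exists>y z. y1 * r * z1 + y2 * r * z2 = y * r * z"
proof -
  from assms obtain e f where e: "projection e" "r * e = e" and f: "projection f" "r * f = f"
    and ef: "e * f = 0" and er: "mvn_equiv e r" and rf: "mvn_equiv r f"
    unfolding properly_infinite_def subprojection_def by blast
  obtain v1 where v1: "cstar v1 * v1 = e" "v1 * cstar v1 = r" using er unfolding mvn_equiv_def by blast
  obtain s2 where s2: "cstar s2 * s2 = r" "s2 * cstar s2 = f" using rf unfolding mvn_equiv_def by blast
  define s1 where "s1 = cstar v1"
  have s1: "s1 * cstar s1 = e" "cstar s1 * s1 = r" using v1 by (simp_all add: s1_def)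
  have es1: "e * s1 = s1" by (rule partial_isometry_left[OF s1(1) e(1)])
  have fs2: "f * s2 = s2" by (rule partial_isometry_left[OF s2(2) f(1)])
  have rs1: "r * s1 = s1" using e(2) es1 by (metis mult.assoc)
  have rs2: "r * s2 = s2" using f(2) fs2 by (metis mult.assoc)
  have "cstar s1 * s2 = cstar (e * s1) * (f * s2)" using es1 fs2 by simp
  also have "\<dots> = cstar s1 * (cstar e * f) * s2" by (simp add: mult.assoc)
  finally have s12: "cstar s1 * s2 = 0" using e(1) ef by (simp add: projectionD)
  then have s21: "cstar s2 * s1 = 0" using cstar_eq[OF s12] by simp
  have "r * (s1 * z1 + s2 * z2) = s1 * z1 + s2 * z2"
    by (simp add: distrib_left mult.assoc[symmetric] rs1 rs2)
  then have "(y1 * cstar s1 + y2 * cstar s2) * r * (s1 * z1 + s2 * z2)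
      = (y1 * cstar s1 + y2 * cstar s2) * (s1 * z1 + s2 * z2)"
    by (simp add: mult.assoc)
  also have "\<dots> = y1 * (cstar s1 * s1) * z1 + y1 * (cstar s1 * s2) * z2
      + y2 * (cstar s2 * s1) * z1 + y2 * (cstar s2 * s2) * z2"
    by (simp add: algebra_simps)
  also have "\<dots> = y1 * r * z1 + y2 * r * z2" using s1 s2 s12 s21 by simp
  finally show ?thesis by metis
qed

lemma full_properly_infinite_approx:
  assumes "properly_infinite (r::'a::cstar_algebra_1)" "full r" "\<epsilon> > 0"
  shows "\<exists>y z. norm (x - y * r * z) < \<epsilon>"
proof -
  define S where "S = {y * r * z |y z. True}"
  have "closed_ideal (closure S)"
  proof (rule closed_ideal_closure)
    show "0 \<in> S" unfolding S_def by (intro CollectI exI[of _ 0]) simp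
    show "a + b \<in> S" if "a \<in> S" "b \<in> S" for a b
      using that properly_infinite_sum[OF assms(1)] unfolding S_def by blast
    show "scaleC c a \<in> S" "b * a \<in> S \<and> a * b \<in> S" if "a \<in> S" for c a b
    proof -
      obtain y z where "a = y * r * z" using \<open>a \<in> S\<close> unfolding S_def by blast
      then have "scaleC c a = scaleC c y * r * z" "b * a = (b * y) * r * z" "a * b = y * r * (z * b)"
        by (simp_all add: mult_scaleC_left mult.assoc)
      then show "scaleC c a \<in> S" "b * a \<in> S \<and> a * b \<in> S" unfolding S_def by blast+
    qed
  qed
  moreover have "r \<in> closure S"
    unfolding S_def by (rule closure_subset[THEN subsetD]) (intro CollectI exI[of _ 1], simp)
  ultimately have "x \<in> closure S" using assms(2) unfolding full_def by blast
  then obtain a where "a \<in> S" "dist a x < \<epsilon>" using closure_approachable assms(3) by blast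
  moreover from \<open>a \<in> S\<close> obtain y z where "a = y * r * z" unfolding S_def by blast
  ultimately show ?thesis
    by (intro exI[of _ y] exI[of _ z]) (simp add: dist_norm norm_minus_commute)
qed

section \<open>Power series in a Banach algebra\<close>

text \<open>Power series with coefficients bounded by 1, evaluated at elements of norm \<open>< 1\<close>.\<close>
definition power_series :: "(nat \<Rightarrow> real) \<Rightarrow> 'a::cstar_algebra_1 \<Rightarrow> 'a" where
  "power_series \<alpha> u = (\<Sum>k. \<alpha> k *\<^sub>R u ^ k)"

lemma power_series_norm_summable:
  fixes u :: "'a::cstar_algebra_1"
  assumes "\<And>k. \<bar>\<alpha> k\<bar> \<le> 1" "norm u < 1"
  shows "summable (\<lambda>k. norm (\<alpha> k *\<^sub>R u ^ k))"
proof (rule summable_comparison_test')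
  show "summable (\<lambda>k. norm u ^ k)" using assms(2) by (intro summable_geometric) simp
  fix k :: nat
  have "\<bar>\<alpha> k\<bar> * norm (u ^ k) \<le> 1 * norm u ^ k"
    by (intro mult_mono assms(1) norm_power_ineq) auto
  then show "norm (norm (\<alpha> k *\<^sub>R u ^ k)) \<le> norm u ^ k" by simp
qed

lemma power_series_summable:
  fixes u :: "'a::cstar_algebra_1"
  assumes "\<And>k. \<bar>\<alpha> k\<bar> \<le> 1" "norm u < 1"
  shows "summable (\<lambda>k. \<alpha> k *\<^sub>R u ^ k)"
  by (rule summable_norm_cancel[OF power_series_norm_summable[OF assms]])

lemma power_series_mult:
  fixes u :: "'a::cstar_algebra_1"
  assumes "\<And>k. \<bar>\<alpha> k\<bar> \<le> 1" "\<And>k. \<bar>\<beta> k\<bar> \<le> 1" "norm u < 1"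
  shows "power_series \<alpha> u * power_series \<beta> u
       = (\<Sum>k. (\<Sum>i\<le>k. \<alpha> i * \<beta> (k - i)) *\<^sub>R u ^ k)"
proof -
  have "power_series \<alpha> u * power_series \<beta> u
      = (\<Sum>k. \<Sum>i\<le>k. (\<alpha> i *\<^sub>R u ^ i) * (\<beta> (k - i) *\<^sub>R u ^ (k - i)))"
    unfolding power_series_def
    by (rule Cauchy_product[OF power_series_norm_summable[OF assms(1,3)]
                               power_series_norm_summable[OF assms(2,3)]])
  also have "\<dots> = (\<Sum>k. (\<Sum>i\<le>k. \<alpha> i * \<beta> (k - i)) *\<^sub>R u ^ k)"
  proof (rule suminf_cong)
    fix k
    have "(\<alpha> i *\<^sub>R u ^ i) * (\<beta> (k - i) *\<^sub>R u ^ (k - i)) = (\<alpha> i * \<beta> (k - i)) *\<^sub>R u ^ k"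
      if "i \<le> k" for i
    proof -
      have "u ^ i * u ^ (k - i) = u ^ k" using that by (simp add: power_add[symmetric])
      then show ?thesis by simp
    qed
    then show "(\<Sum>i\<le>k. (\<alpha> i *\<^sub>R u ^ i) * (\<beta> (k - i) *\<^sub>R u ^ (k - i)))
        = (\<Sum>i\<le>k. \<alpha> i * \<beta> (k - i)) *\<^sub>R u ^ k"
      by (simp add: scaleR_sum_left)
  qed
  finally show ?thesis .
qed

lemma power_commute: "a * u = u * a \<Longrightarrow> a * u ^ k = u ^ k * (a::'a::cstar_algebra_1)"
  by (induction k) (simp_all add: mult.assoc[symmetric], metis mult.assoc)

lemma power_series_commute:
  fixes u :: "'a::cstar_algebra_1"
  assumes "\<And>k. \<bar>\<alpha> k\<bar> \<le> 1" "norm u < 1" "a * u = u * a"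
  shows "a * power_series \<alpha> u = power_series \<alpha> u * a"
proof -
  have s: "summable (\<lambda>k. \<alpha> k *\<^sub>R u ^ k)" by (rule power_series_summable[OF assms(1,2)])
  have "a * power_series \<alpha> u = (\<Sum>k. a * (\<alpha> k *\<^sub>R u ^ k))"
    unfolding power_series_def by (rule suminf_mult[OF s, symmetric])
  also have "\<dots> = (\<Sum>k. (\<alpha> k *\<^sub>R u ^ k) * a)" using power_commute[OF assms(3)] by simp
  also have "\<dots> = power_series \<alpha> u * a"
    unfolding power_series_def by (rule suminf_mult2[OF s, symmetric])
  finally show ?thesis .
qed

lemma power_series_selfadjoint:
  fixes u :: "'a::cstar_algebra_1"
  assumes "\<And>k. \<bar>\<alpha> k\<bar> \<le> 1" "norm u < 1" "cstar u = u"
  shows "cstar (power_series \<alpha> u) = power_series \<alpha> u"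
proof -
  have "cstar (u ^ k) = u ^ k" for k
    using assms(3) by (induction k) (simp_all, metis power_commute)
  then show ?thesis unfolding power_series_def
    using bounded_linear.suminf[OF bounded_linear_cstar power_series_summable[OF assms(1,2)]]
    by simp
qed

lemma neumann_series:
  fixes u :: "'a::cstar_algebra_1"
  assumes "norm u < 1"
  shows "power_series (\<lambda>_. 1) u * (1 - u) = 1"
proof -
  have s: "summable (\<lambda>k. (1::real) *\<^sub>R u ^ k)" by (rule power_series_summable) (use assms in auto)
  have "power_series (\<lambda>_. 1) u * (1 - u) = (\<Sum>k. ((1::real) *\<^sub>R u ^ k) * (1 - u))"
    unfolding power_series_def by (rule suminf_mult2[OF s])
  also have "\<dots> = (\<Sum>k. u ^ k - u ^ Suc k)"
    by (simp add: right_diff_distrib power_Suc2 del: power_Suc)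
  also have "\<dots> = 1"
  proof (rule sums_unique[symmetric])
    have "(\<lambda>n. - (u ^ n)) \<longlonglongrightarrow> 0" using tendsto_minus[OF LIMSEQ_power_zero[OF assms]] by simp
    from telescope_sums[OF this] show "(\<lambda>k. u ^ k - u ^ Suc k) sums 1" by simp
  qed
  finally show ?thesis .
qed

lemma gbinomial_abs_le_1:
  assumes "\<bar>a\<bar> \<le> (1::real)" shows "\<bar>a gchoose k\<bar> \<le> 1"
proof (induction k)
  case (Suc k)
  have "of_nat (Suc k) * (a gchoose Suc k) = (a - of_nat k) * (a gchoose k)"
    using gbinomial_mult_1[of a k] by (simp add: algebra_simps)
  then have eq: "a gchoose Suc k = (a - of_nat k) / of_nat (Suc k) * (a gchoose k)"
    by (simp add: field_simps del: of_nat_Suc)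
  have "\<bar>(a - of_nat k) / of_nat (Suc k)\<bar> \<le> 1"
    using assms by (simp add: divide_le_eq_1)
  then have "\<bar>(a - of_nat k) / of_nat (Suc k) * (a gchoose k)\<bar> \<le> 1 * 1"
    unfolding abs_mult by (intro mult_mono Suc) auto
  then show ?case using eq by simp
qed simp

text \<open>Coefficients of \<open>(1 - x)\<^sup>c\<close>, and their convolution law \<open>(1-x)\<^sup>c (1-x)\<^sup>d = (1-x)\<^sup>c\<^sup>+\<^sup>d\<close>.\<close>
definition binomial_coeff :: "real \<Rightarrow> nat \<Rightarrow> real" where
  "binomial_coeff c k = (c gchoose k) * (-1) ^ k"

lemma binomial_coeff_bound: "\<bar>c\<bar> \<le> 1 \<Longrightarrow> \<bar>binomial_coeff c k\<bar> \<le> 1"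
  unfolding binomial_coeff_def abs_mult power_abs by (simp add: gbinomial_abs_le_1)

lemma binomial_coeff_convolution:
  "(\<Sum>i\<le>k. binomial_coeff c i * binomial_coeff d (k - i)) = binomial_coeff (c + d) k"
proof -
  have "(\<Sum>i\<le>k. binomial_coeff c i * binomial_coeff d (k - i))
      = (\<Sum>i\<le>k. ((c gchoose i) * (d gchoose (k - i))) * (-1)^k)"
  proof (rule sum.cong)
    fix i assume "i \<in> {..k}"
    then have sign: "(-1::real) ^ i * (-1) ^ (k - i) = (-1) ^ k" by (simp flip: power_add)
    have "binomial_coeff c i * binomial_coeff d (k - i)
        = ((c gchoose i) * (d gchoose (k - i))) * ((-1) ^ i * (-1) ^ (k - i))"
      unfolding binomial_coeff_def by (simp only: mult_ac)
    then show "binomial_coeff c i * binomial_coeff d (k - i)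
        = ((c gchoose i) * (d gchoose (k - i))) * (-1)^k"
      by (simp only: sign)
  qed simp
  also have "\<dots> = (\<Sum>i=0..k. (c gchoose i) * (d gchoose (k - i))) * (-1)^k"
    by (simp add: sum_distrib_right atMost_atLeast0)
  also have "\<dots> = binomial_coeff (c + d) k"
    by (simp add: binomial_coeff_def gbinomial_Vandermonde)
  finally show ?thesis .
qed

lemma binomial_coeff_one: "binomial_coeff 1 k = (if k = 0 then 1 else if k = 1 then -1 else 0)"
proof -
  have eq: "binomial_coeff 1 k = real (1 choose k) * (-1) ^ k"
    unfolding binomial_coeff_def using binomial_gbinomial[of 1 k, where 'a=real] by simp
  show ?thesis
  proof (cases "k \<le> 1")
    case True
    then have "k = 0 \<or> k = 1" by auto
    then show ?thesis using eq by auto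
  next
    case False
    then have "(1::nat) choose k = 0" "k \<noteq> 0" "k \<noteq> 1" by (simp_all add: binomial_eq_0)
    then show ?thesis using eq by (simp only: if_False of_nat_0 mult_zero_left)
  qed
qed

lemma binomial_coeff_minus_one: "binomial_coeff (-1) k = 1"
proof -
  have "(-1::real) gchoose k = (-1) ^ k"
    using gbinomial_negated_upper[of "-1::real" k] binomial_gbinomial[of k k] by simp
  then show ?thesis by (simp add: binomial_coeff_def flip: power_mult_distrib)
qed

definition sqrt_one_minus :: "'a::cstar_algebra_1 \<Rightarrow> 'a" where
  "sqrt_one_minus u = power_series (binomial_coeff (1/2)) u"

definition inv_sqrt_one_minus :: "'a::cstar_algebra_1 \<Rightarrow> 'a" where
  "inv_sqrt_one_minus u = power_series (binomial_coeff (-1/2)) u"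

lemma sqrt_one_minus_square:
  assumes "norm (u::'a::cstar_algebra_1) < 1"
  shows "sqrt_one_minus u * sqrt_one_minus u = 1 - u"
proof -
  have "sqrt_one_minus u * sqrt_one_minus u = (\<Sum>k. binomial_coeff 1 k *\<^sub>R u ^ k)"
    unfolding sqrt_one_minus_def
    by (subst power_series_mult[OF binomial_coeff_bound binomial_coeff_bound assms])
       (simp_all add: binomial_coeff_convolution)
  also have "\<dots> = (\<Sum>k\<in>{0,1}. binomial_coeff 1 k *\<^sub>R u ^ k)"
    by (rule suminf_finite) (auto simp: binomial_coeff_one)
  also have "\<dots> = 1 - u" by (simp add: binomial_coeff_one)
  finally show ?thesis .
qed

lemma inv_sqrt_one_minus_square:
  assumes "norm (u::'a::cstar_algebra_1) < 1"
  shows "inv_sqrt_one_minus u * inv_sqrt_one_minus u * (1 - u) = 1"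
proof -
  have "(\<Sum>i\<le>k. binomial_coeff (-1/2) i * binomial_coeff (-1/2) (k - i)) = 1" for k
    using binomial_coeff_convolution[of "-1/2" "-1/2" k] binomial_coeff_minus_one[of k] by simp
  then have square: "inv_sqrt_one_minus u * inv_sqrt_one_minus u = power_series (\<lambda>_. 1) u"
    unfolding inv_sqrt_one_minus_def power_series_def[of "\<lambda>_. 1"]
    by (subst power_series_mult[OF binomial_coeff_bound binomial_coeff_bound assms]) simp_all
  show ?thesis unfolding square by (rule neumann_series[OF assms])
qed

section \<open>Functional calculus in a corner\<close>

lemma corner_sqrt:
  fixes P u :: "'a::cstar_algebra_1"
  assumes P: "projection P" and Pu: "P * u = u" "u * P = u"
    and u: "cstar u = u" "norm u < 1"
  obtains S where "cstar S = S" "S * S = P - u" "P * S = S" "S * P = S"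
proof
  let ?R = "sqrt_one_minus u"
  have bound: "\<bar>binomial_coeff (1/2) k\<bar> \<le> 1" for k by (simp add: binomial_coeff_bound)
  have comm: "P * ?R = ?R * P"
    unfolding sqrt_one_minus_def by (rule power_series_commute[OF bound u(2)]) (simp add: Pu)
  have sa: "cstar ?R = ?R"
    unfolding sqrt_one_minus_def by (rule power_series_selfadjoint[OF bound u(2,1)])
  show "cstar (P * ?R) = P * ?R" using sa comm P by (simp add: projectionD)
  have "P * ?R * (P * ?R) = P * P * (?R * ?R)" by (metis comm mult.assoc)
  also have "\<dots> = P - u"
    using P Pu by (simp add: sqrt_one_minus_square[OF u(2)] projectionD right_diff_distrib)
  finally show "P * ?R * (P * ?R) = P - u" .
  show "P * (P * ?R) = P * ?R" using P by (simp add: projectionD mult.assoc[symmetric])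
  show "P * ?R * P = P * ?R" using P by (metis comm mult.assoc projectionD(1))
qed

lemma corner_inv_sqrt:
  fixes P u :: "'a::cstar_algebra_1"
  assumes P: "projection P" and Pu: "P * u = u" "u * P = u"
    and u: "cstar u = u" "norm u < 1"
  obtains K where "cstar K = K" "K * (P - u) * K = P"
proof
  let ?R = "inv_sqrt_one_minus u"
  have bound: "\<bar>binomial_coeff (-1/2) k\<bar> \<le> 1" for k by (simp add: binomial_coeff_bound)
  have commP: "P * ?R = ?R * P"
    unfolding inv_sqrt_one_minus_def by (rule power_series_commute[OF bound u(2)]) (simp add: Pu)
  have commu: "(1 - u) * ?R = ?R * (1 - u)"
    unfolding inv_sqrt_one_minus_def
    by (rule power_series_commute[OF bound u(2)]) (simp add: algebra_simps)
  have sa: "cstar ?R = ?R"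
    unfolding inv_sqrt_one_minus_def by (rule power_series_selfadjoint[OF bound u(2,1)])
  show "cstar (P * ?R) = P * ?R" using sa commP P by (simp add: projectionD)
  have "P - u = (1 - u) * P" using Pu by (simp add: left_diff_distrib)
  then have "P * ?R * (P - u) * (P * ?R) = P * ?R * (1 - u) * (P * P) * ?R"
    by (simp only: mult.assoc)
  also have "\<dots> = P * ?R * (1 - u) * (P * ?R)" using P by (metis mult.assoc projectionD(1))
  also have "\<dots> = P * (?R * (1 - u) * ?R) * P" by (metis commP mult.assoc)
  also have "\<dots> = P * (?R * ?R * (1 - u)) * P" by (metis commu mult.assoc)
  also have "\<dots> = P" using P by (simp add: inv_sqrt_one_minus_square[OF u(2)] projectionD)
  finally show "P * ?R * (P - u) * (P * ?R) = P" .
qed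

text \<open>If \<open>T\<close> maps \<open>P\<close> into an orthogonal projection \<open>R\<close> and \<open>\<parallel>T\<parallel> < 1\<close>, then
  \<open>\<parallel>P - T\<^sup>* T\<parallel> \<le> 1\<close>: with \<open>S = (P - T\<^sup>* T)\<^sup>1\<^sup>/\<^sup>2\<close>, the element \<open>T + S\<close> is an isometry
  on \<open>P\<close>, so \<open>S = P (T + S)\<close> has norm at most 1.\<close>
lemma norm_corner_defect_le_1:
  fixes P R T :: "'a::cstar_algebra_1"
  assumes P: "projection P" and R: "projection R" and PR: "P * R = 0"
    and RT: "R * T = T" and TP: "T * P = T" and nT: "norm T < 1"
  shows "norm (P - cstar T * T) \<le> 1"
proof -
  have RP: "R * P = 0" by (rule projection_orth_sym[OF P R PR])
  define u where "u = cstar T * T"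
  have "norm u \<le> norm T * norm T" unfolding u_def using norm_mult_ineq[of "cstar T" T] by simp
  also have "\<dots> \<le> norm T" by (rule mult_left_le_one_le) (use nT in auto)
  finally have nu: "norm u < 1" using nT by simp
  have cTP: "P * cstar T = cstar T" using cstar_eq[OF TP] P by (simp add: projectionD)
  have cTR: "cstar T * R = cstar T" using cstar_eq[OF RT] R by (simp add: projectionD)
  have Pu: "P * u = u" "u * P = u"
    unfolding u_def using cTP TP by (simp add: mult.assoc[symmetric], simp add: mult.assoc)
  obtain S where S: "cstar S = S" "S * S = P - u" "P * S = S" "S * P = S"
    using corner_sqrt[OF P Pu _ nu] by (auto simp: u_def)
  have PT: "P * T = 0" using PR RT by (metis mult.assoc mult_zero_left)
  have TS: "cstar T * S = 0" using cTR RP S(3) by (metis mult.assoc mult_zero_left mult_zero_right)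
  have ST: "S * T = 0" using PT S(4) by (metis mult.assoc mult_zero_right)
  have "cstar (T + S) * (T + S) = P"
    using TS ST S(1,2) cstar_eq[OF TS] by (simp add: algebra_simps u_def)
  then have "(norm (T + S))\<^sup>2 \<le> 1" using cstar_identity[of "T + S"] projection_norm_le_1[OF P] by simp
  then have "norm (T + S) \<le> 1" by (simp add: power_le_one_iff)
  moreover have "P * (T + S) = S" using PT S(3) by (simp add: distrib_left)
  ultimately have "norm S \<le> 1"
    using norm_mult_ineq[of P "T + S"] mult_le_one[OF projection_norm_le_1[OF P] norm_ge_zero]
    by (metis order_trans)
  then have "(norm S)\<^sup>2 \<le> 1" by (simp add: power_le_one)
  then show ?thesis using cstar_identity[of S] S(1,2) by (simp add: u_def)
qed

text \<open>It is obtained from \<open>corner_inv_sqrt\<close> after scaling: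
  \<open>p - (p + R\<^sup>* R)/M\<close> is a multiple of \<open>p - T\<^sup>* T\<close> with \<open>T = R/(\<parallel>R\<parallel> + 1)\<close>, hence has norm
  \<open>< 1\<close> by \<open>norm_corner_defect_le_1\<close>.\<close>
lemma corner_inv_sqrt_perturbed:
  fixes p r R :: "'a::cstar_algebra_1"
  assumes p: "projection p" and r: "projection r" and pr: "p * r = 0"
    and rR: "r * R = R" and Rp: "R * p = R"
  obtains K where "cstar K * (p + cstar R * R) * K = p"
proof -
  define \<rho> where "\<rho> = norm R"
  define M where "M = 1 + (\<rho> + 1)\<^sup>2"
  define T where "T = (1 / (\<rho> + 1)) *\<^sub>R R"
  have \<rho>: "\<rho> \<ge> 0" by (simp add: \<rho>_def)
  then have M: "M > 1" by (simp add: M_def)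
  have nT: "norm T < 1" unfolding T_def using \<rho> by (simp add: \<rho>_def[symmetric] field_simps)
  have "r * T = T" "T * p = T" unfolding T_def using rR Rp by (simp_all add: scaleR_left_commute)
  then have defect: "norm (p - cstar T * T) \<le> 1"
    using norm_corner_defect_le_1[OF p r pr _ _ nT] by simp
  define v where "v = p - (1 / M) *\<^sub>R (p + cstar R * R)"
  have v_eq: "v = ((\<rho> + 1)\<^sup>2 / M) *\<^sub>R (p - cstar T * T)"
  proof -
    have "(\<rho> + 1)\<^sup>2 = M - 1" by (simp add: M_def)
    then have e1: "1 - 1 / M = (\<rho> + 1)\<^sup>2 / M" using M by (simp add: diff_divide_distrib)
    have e2: "1 / M = (\<rho> + 1)\<^sup>2 / M * (1 / (\<rho> + 1))\<^sup>2" using \<rho> M by (simp add: field_simps)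
    have TT: "cstar T * T = (1 / (\<rho> + 1))\<^sup>2 *\<^sub>R (cstar R * R)"
      unfolding T_def by (simp add: power2_eq_square scaleR_left_commute)
    have "v = (1 - 1 / M) *\<^sub>R p - (1 / M) *\<^sub>R (cstar R * R)"
      unfolding v_def by (simp add: scaleR_add_right scaleR_diff_left)
    also have "\<dots> = ((\<rho> + 1)\<^sup>2 / M) *\<^sub>R p - ((\<rho> + 1)\<^sup>2 / M * (1 / (\<rho> + 1))\<^sup>2) *\<^sub>R (cstar R * R)"
      unfolding e1 e2[symmetric] ..
    also have "\<dots> = ((\<rho> + 1)\<^sup>2 / M) *\<^sub>R (p - cstar T * T)"
      unfolding TT by (simp add: scaleR_diff_right)
    finally show ?thesis .
  qed
  have "norm v = (\<rho> + 1)\<^sup>2 / M * norm (p - cstar T * T)" unfolding v_eq using M by simp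
  also have "\<dots> \<le> (\<rho> + 1)\<^sup>2 / M * 1" by (rule mult_left_mono[OF defect]) (use M in simp)
  also have "\<dots> < 1" using M by (simp add: divide_less_eq_1_pos M_def[symmetric]) (simp add: M_def)
  finally have nv: "norm v < 1" .
  have pR: "p * cstar R = cstar R" using cstar_eq[OF Rp] p by (simp add: projectionD)
  have pv: "p * v = v" "v * p = v"
    unfolding v_def using p Rp pR by (simp_all add: algebra_simps projectionD mult.assoc[symmetric])
  have "cstar v = v" unfolding v_def using p by (simp add: projectionD)
  then obtain K0 where K0: "cstar K0 = K0" "K0 * (p - v) * K0 = p"
    using corner_inv_sqrt[OF p pv _ nv] by blast
  show ?thesis
  proof
    have "p + cstar R * R = M *\<^sub>R (p - v)" unfolding v_def using M by simp
    then have "cstar ((1 / sqrt M) *\<^sub>R K0) * (p + cstar R * R) * ((1 / sqrt M) *\<^sub>R K0)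
        = (1 / sqrt M * M * (1 / sqrt M)) *\<^sub>R (K0 * (p - v) * K0)"
      using K0(1) by (simp add: scaleR_left_commute)
    also have "1 / sqrt M * M * (1 / sqrt M) = 1" using M by (simp add: field_simps)
    finally show "cstar ((1 / sqrt M) *\<^sub>R K0) * (p + cstar R * R) * ((1 / sqrt M) *\<^sub>R K0) = p"
      using K0(2) by simp
  qed
qed

text \<open>After rescaling to \<open>\<parallel>c\<parallel> < 1\<close>, put \<open>D = c\<^sup>* c\<close> and
  \<open>R = (r - D)\<^sup>1\<^sup>/\<^sup>2 w\<close>; then \<open>w\<^sup>* w = p + R\<^sup>* R\<close>, and \<open>V = w K\<close> with \<open>K\<close> from
  \<open>corner_inv_sqrt_perturbed\<close>.\<close>
lemma isometry_from_factorization: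
  fixes p r c w :: "'a::cstar_algebra_1"
  assumes p: "projection p" and r: "projection r" and pr: "p * r = 0"
    and cw: "c * w = p" and cr: "c * r = c" and rw: "r * w = w" and wp: "w * p = w"
  obtains V where "cstar V * V = p" "r * V = V"
proof -
  define s where "s = norm c + 1"
  have s: "s > 0" unfolding s_def by (simp add: add_nonneg_pos)
  define c' where "c' = (1 / s) *\<^sub>R c"
  define w' where "w' = s *\<^sub>R w"
  have cw': "c' * w' = p" unfolding c'_def w'_def using s cw by simp
  have nc': "norm c' < 1" unfolding c'_def using s by (simp add: s_def field_simps)
  have cr': "c' * r = c'" unfolding c'_def using cr by (simp add: scaleR_left_commute)
  have rw': "r * w' = w'" "w' * p = w'"
    unfolding w'_def using rw wp by (simp_all add: scaleR_left_commute)
  define D where "D = cstar c' * c'"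
  have "norm D \<le> norm c' * norm c'" unfolding D_def using norm_mult_ineq[of "cstar c'" c'] by simp
  also have "\<dots> \<le> norm c'" by (rule mult_left_le_one_le) (use nc' in auto)
  finally have nD: "norm D < 1" using nc' by simp
  have rc': "r * cstar c' = cstar c'" using cstar_eq[OF cr'] r by (simp add: projectionD)
  have rD: "r * D = D" "D * r = D"
    unfolding D_def using rc' cr' by (simp add: mult.assoc[symmetric], simp add: mult.assoc)
  obtain S where S: "cstar S = S" "S * S = r - D" "r * S = S" "S * r = S"
    using corner_sqrt[OF r rD _ nD] by (auto simp: D_def)
  define R where "R = S * w'"
  have R: "r * R = R" "R * p = R" unfolding R_def using S(3) rw'(2) by (simp_all add: mult.assoc[symmetric] mult.assoc)
  have "cstar R * R = cstar w' * (S * S) * w'" unfolding R_def using S(1) by (simp add: mult.assoc)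
  also have "\<dots> = cstar w' * (r - D) * w'" by (simp only: S(2))
  also have "\<dots> = cstar w' * w' - cstar (c' * w') * (c' * w')"
    using rw'(1) by (simp add: D_def algebra_simps mult.assoc)
  finally have ww: "cstar w' * w' = p + cstar R * R" using cw' p by (simp add: projectionD)
  obtain K where K: "cstar K * (p + cstar R * R) * K = p"
    using corner_inv_sqrt_perturbed[OF p r pr R] .
  show ?thesis
  proof
    have "cstar (w' * K) * (w' * K) = cstar K * (cstar w' * w') * K" by (simp add: mult.assoc)
    then show "cstar (w' * K) * (w' * K) = p" using K ww by simp
    show "r * (w' * K) = w' * K" using rw'(1) by (simp add: mult.assoc[symmetric])
  qed
qed

text \<open>A full, properly infinite projection \<open>r\<close> factors every projection \<open>p\<close> as \<open>p = c w\<close>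
  with \<open>c \<in> A r\<close>, \<open>w \<in> r A p\<close>: approximate \<open>p\<close> by \<open>y r z\<close> within 1 and invert the compression
  \<open>p y r z p = p - u\<close> in the corner of \<open>p\<close> by a Neumann series.\<close>
lemma factorization_through_full:
  fixes p r :: "'a::cstar_algebra_1"
  assumes p: "projection p" and r: "projection r" "properly_infinite r" "full r"
  obtains c w where "c * w = p" "c * r = c" "r * w = w" "w * p = w"
proof -
  obtain y z where yz: "norm (p - y * r * z) < 1"
    using full_properly_infinite_approx[OF r(2,3), of 1 p] by auto
  define u where "u = p - p * (y * r * z) * p"
  have u_eq: "u = p * (p - y * r * z) * p"
    unfolding u_def using p by (simp add: projectionD right_diff_distrib left_diff_distrib)
  have "norm u \<le> norm (p * (p - y * r * z)) * norm p" unfolding u_eq by (rule norm_mult_ineq)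
  also have "\<dots> \<le> norm (p * (p - y * r * z))"
    using mult_left_mono[OF projection_norm_le_1[OF p], of "norm (p * (p - y * r * z))"] by simp
  also have "\<dots> \<le> norm p * norm (p - y * r * z)" by (rule norm_mult_ineq)
  also have "\<dots> \<le> norm (p - y * r * z)"
    using mult_right_mono[OF projection_norm_le_1[OF p], of "norm (p - y * r * z)"] by simp
  finally have nu: "norm u < 1" using yz by simp
  have pu: "p * u = u" "u * p = u"
    unfolding u_eq using projectionD(1)[OF p] by (metis mult.assoc)+
  define N where "N = power_series (\<lambda>_. 1) u"
  have pN: "p * N = N * p" unfolding N_def by (rule power_series_commute) (use nu pu in auto)
  have compression: "p * (y * r * z) * p = (1 - u) * p"
    using pu(2) by (simp add: u_def left_diff_distrib)
  show ?thesis
  proof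
    have "p * N * p * y * r * (r * z * p) = p * N * (p * (y * (r * r) * z) * p)"
      by (simp only: mult.assoc)
    also have "\<dots> = p * (N * (1 - u)) * p"
      using r(1) compression by (simp add: projectionD mult.assoc)
    also have "\<dots> = p" using neumann_series[OF nu] p by (simp add: N_def projectionD)
    finally show "p * N * p * y * r * (r * z * p) = p" .
    show "p * N * p * y * r * r = p * N * p * y * r" using r(1) by (simp add: projectionD mult.assoc)
    show "r * (r * z * p) = r * z * p" using r(1) by (simp add: projectionD mult.assoc[symmetric])
    show "r * z * p * p = r * z * p" using p by (simp add: projectionD mult.assoc)
  qed
qed

section \<open>Homotopies of projections\<close>

text \<open>Two orthogonal, Murray--von Neumann equivalent projections are homotopic, via the
  rotation \<open>cos\<^sup>2 \<theta> P + sin \<theta> cos \<theta> (v + v\<^sup>*) + sin\<^sup>2 \<theta> Q\<close>, \<open>0 \<le> \<theta> \<le> \<pi>/2\<close>.\<close>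
lemma homotopic_orthogonal_equivalent:
  fixes P Q v :: "'a::cstar_algebra_1"
  assumes P: "projection P" and Q: "projection Q"
    and vP: "cstar v * v = P" and vQ: "v * cstar v = Q" and PQ: "P * Q = 0"
  shows "homotopic_proj P Q"
proof -
  have PP: "P * P = P" "cstar P = P" and QQ: "Q * Q = Q" "cstar Q = Q"
    using P Q by (simp_all add: projectionD)
  have QP: "Q * P = 0" by (rule projection_orth_sym[OF P Q PQ])
  have vP': "v * P = v" by (rule partial_isometry_right[OF vP P])
  have Qv: "Q * v = v" by (rule partial_isometry_left[OF vQ Q])
  have Pv: "P * v = 0" using PQ Qv by (metis mult.assoc mult_zero_left)
  have vQ': "v * Q = 0" using PQ vP' by (metis mult.assoc mult_zero_right)
  have vv: "v * v = 0" using Pv vP' by (metis mult.assoc mult_zero_right)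
  have adjoint_rules: "cstar v * P = 0" "P * cstar v = cstar v" "Q * cstar v = 0"
    "cstar v * Q = cstar v" "cstar v * cstar v = 0"
    using cstar_eq[OF Pv] cstar_eq[OF vP'] cstar_eq[OF vQ'] cstar_eq[OF Qv] cstar_eq[OF vv] PP QQ
    by simp_all
  define g where "g t = (cos (t * pi / 2))\<^sup>2 *\<^sub>R P
      + (sin (t * pi / 2) * cos (t * pi / 2)) *\<^sub>R (v + cstar v) + (sin (t * pi / 2))\<^sup>2 *\<^sub>R Q" for t
  have "projection (g t)" for t
  proof -
    define c where "c = cos (t * pi / 2)"
    define s where "s = sin (t * pi / 2)"
    have cs: "c\<^sup>2 + s\<^sup>2 = 1" unfolding c_def s_def by simp
    have g: "g t = c\<^sup>2 *\<^sub>R P + (s * c) *\<^sub>R (v + cstar v) + s\<^sup>2 *\<^sub>R Q"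
      unfolding g_def c_def s_def by simp
    have "g t * g t = (c\<^sup>2 * (c\<^sup>2 + s\<^sup>2)) *\<^sub>R P + (s * c * (c\<^sup>2 + s\<^sup>2)) *\<^sub>R (v + cstar v)
        + (s\<^sup>2 * (c\<^sup>2 + s\<^sup>2)) *\<^sub>R Q"
      unfolding g by (simp add: algebra_simps power2_eq_square PP QQ PQ QP vP' Qv Pv vQ' vv
          adjoint_rules vP vQ)
    then have "g t * g t = g t" unfolding cs g by simp
    moreover have "cstar (g t) = g t" unfolding g using PP QQ by (simp add: algebra_simps)
    ultimately show ?thesis unfolding projection_def by simp
  qed
  moreover have "continuous_on {0..1} g" unfolding g_def by (intro continuous_intros) auto
  moreover have "g 0 = P" "g 1 = Q" unfolding g_def by simp_all
  ultimately show ?thesis unfolding homotopic_proj_def by blast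
qed

lemma homotopic_proj_trans:
  assumes "homotopic_proj (P::'a::cstar_algebra_1) Q" "homotopic_proj Q R"
  shows "homotopic_proj P R"
proof -
  obtain g1 :: "real \<Rightarrow> 'a" where g1: "path g1" "\<forall>t\<in>{0..1}. projection (g1 t)" "g1 0 = P" "g1 1 = Q"
    using assms(1) unfolding homotopic_proj_def path_def by blast
  obtain g2 :: "real \<Rightarrow> 'a" where g2: "path g2" "\<forall>t\<in>{0..1}. projection (g2 t)" "g2 0 = Q" "g2 1 = R"
    using assms(2) unfolding homotopic_proj_def path_def by blast
  have "path (g1 +++ g2)" using g1 g2 by (simp add: pathstart_def pathfinish_def)
  moreover have "\<forall>t\<in>{0..1}. projection ((g1 +++ g2) t)"
    using g1(2) g2(2) by (auto simp: joinpaths_def)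
  ultimately show ?thesis unfolding homotopic_proj_def path_def[symmetric]
    using g1 g2 by (intro exI[of _ "g1 +++ g2"]) (auto simp: joinpaths_def)
qed

lemma homotopic_through_orthogonal_copy:
  fixes p q r V :: "'a::cstar_algebra_1"
  assumes p: "projection p" and q: "projection q" and pq: "mvn_equiv p q"
    and pr: "p * r = 0" and qr: "q * r = 0" and V: "cstar V * V = p" "r * V = V"
  shows "homotopic_proj p q"
proof -
  define e where "e = V * cstar V"
  have Vp: "V * p = V" by (rule partial_isometry_right[OF V(1) p])
  have e: "projection e"
    unfolding projection_def e_def using V(1) Vp by (simp, metis mult.assoc)
  have pe: "p * e = 0" and qe: "q * e = 0"
    unfolding e_def using pr qr V(2) by (metis mult.assoc mult_zero_left)+
  obtain v0 where v0: "cstar v0 * v0 = p" "v0 * cstar v0 = q" using pq unfolding mvn_equiv_def by blast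
  have v0p: "v0 * p = v0" by (rule partial_isometry_right[OF v0(1) p])
  have "homotopic_proj p e" by (rule homotopic_orthogonal_equivalent[OF p e V(1) e_def[symmetric] pe])
  moreover have "homotopic_proj e q"
  proof (rule homotopic_orthogonal_equivalent[OF e q])
    show "cstar (v0 * cstar V) * (v0 * cstar V) = e"
      using v0(1) Vp by (simp add: e_def mult.assoc[symmetric]) (simp add: mult.assoc)
    show "v0 * cstar V * cstar (v0 * cstar V) = q"
      using V(1) v0p v0(2) by (simp add: mult.assoc[symmetric]) (simp add: mult.assoc)
    show "e * q = 0" by (rule projection_orth_sym[OF q e qe])
  qed
  ultimately show ?thesis by (rule homotopic_proj_trans)
qed

theorem proposition2p5:
  fixes p q r :: "'a::cstar_algebra_1"
  assumes "projection p" and "projection q"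
    and "properly_infinite p" and "full p"
    and "properly_infinite q" and "full q"
    and "mvn_equiv p q"
    and "projection r" and "properly_infinite r" and "full r"
    and "p * r = 0" and "q * r = 0"
  shows "homotopic_proj p q"
proof -
  obtain c w where "c * w = p" "c * r = c" "r * w = w" "w * p = w"
    using factorization_through_full[OF assms(1,8,9,10)] .
  then obtain V where "cstar V * V = p" "r * V = V"
    using isometry_from_factorization[OF assms(1,8,11)] by metis
  then show ?thesis
    using homotopic_through_orthogonal_copy[OF assms(1,2,7,11,12)] by blast
qed

end
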